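(* Let $K$ be a $p$-adic field and let $L$ be a totally ramified finite extension of $K$. Then the following are equivalent: (1) there exists a compatible system of angular component maps $(\mathrm{ac}_N)_{N\ge1}$ on $L$ whose restrictions to $K$ determine a compatible system of angular component maps on $K$ (i.e. $\mathrm{ac}_N(K)\subseteq\mathcal{O}_K/(N\mathcal{M}_K)\subseteq \mathcal{O}_L/(N\mathcal{M}_L)$ for all $N$); (2) there exists a uniformizer $\tau$ of $L$ such that $\tau^{[L:K]}\in K$.
   Context: A $p$-adic field is a finite extension of $\mathbb{Q}_p$. For a valued field $K$ with valuation ring $\mathcal{O}_K$ and maximal ideal $\mathcal{M}_K$ and $N\ge1$, let $R_N=\mathcal{O}_K/(N\mathcal{M}_K)$. An angular component map $\mathrm{ac}_N\colon K\to R_N$ is a multiplicative homomorphism $K^\times\to R_N^\times$ whose restriction to $\mathcal{O}_K^\times$ is the natural projection, extended by $\mathrm{ac}_N(0)=0$. A family $(\mathrm{ac}_N)_{N\ge1}$ is a compatible system if it commutes with the natural projections $R_{NM}\to R_N$ for all $N,M$. For $K\le L$ with $\mathcal{O}_K=K\cap\mathcal{O}_L$, one has $N\mathcal{M}_K=K\cap N\mathcal{M}_L$, so $\mathcal{O}_K/(N\mathcal{M}_K)$ is naturally a subring of $\mathcal{O}_L/(N\mathcal{M}_L)$. *)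

theory Defs
  imports Main
begin

text \<open>A field F is modelled as a subset of an ambient field type of characteristic 0;
  a valuation on it is an integer-valued map v (its value at 0 is irrelevant).\<close>

definition subfield :: "'a::field set \<Rightarrow> bool" where
  "subfield F \<longleftrightarrow> 0 \<in> F \<and> 1 \<in> F \<and>
     (\<forall>x\<in>F. \<forall>y\<in>F. x + y \<in> F \<and> x - y \<in> F \<and> x * y \<in> F) \<and>
     (\<forall>x\<in>F. x \<noteq> 0 \<longrightarrow> inverse x \<in> F)"

definition valuation_on :: "'a::field set \<Rightarrow> ('a \<Rightarrow> int) \<Rightarrow> bool" where
  "valuation_on F v \<longleftrightarrow>
     (\<forall>x\<in>F. \<forall>y\<in>F. x \<noteq> 0 \<longrightarrow> y \<noteq> 0 \<longrightarrow> v (x * y) = v x + v y) \<and>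
     (\<forall>x\<in>F. \<forall>y\<in>F. x \<noteq> 0 \<longrightarrow> y \<noteq> 0 \<longrightarrow> x + y \<noteq> 0 \<longrightarrow> min (v x) (v y) \<le> v (x + y)) \<and>
     (\<exists>x\<in>F. x \<noteq> 0 \<and> v x \<noteq> 0)"

definition valring :: "'a::field set \<Rightarrow> ('a \<Rightarrow> int) \<Rightarrow> 'a set" where
  "valring F v = {x\<in>F. x = 0 \<or> 0 \<le> v x}"

definition maxid :: "'a::field set \<Rightarrow> ('a \<Rightarrow> int) \<Rightarrow> 'a set" where
  "maxid F v = {x\<in>F. x = 0 \<or> 0 < v x}"

definition unitsO :: "'a::field set \<Rightarrow> ('a \<Rightarrow> int) \<Rightarrow> 'a set" where
  "unitsO F v = {x\<in>F. x \<noteq> 0 \<and> v x = 0}"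

definition complete_wrt :: "'a::field set \<Rightarrow> ('a \<Rightarrow> int) \<Rightarrow> bool" where
  "complete_wrt F v \<longleftrightarrow>
     (\<forall>X::nat \<Rightarrow> 'a. (\<forall>i. X i \<in> F) \<and>
        (\<forall>n::int. \<exists>M. \<forall>i\<ge>M. \<forall>j\<ge>M. X i = X j \<or> n \<le> v (X i - X j)) \<longrightarrow>
        (\<exists>l\<in>F. \<forall>n::int. \<exists>M. \<forall>i\<ge>M. X i = l \<or> n \<le> v (X i - l)))"

definition finite_residue :: "'a::field set \<Rightarrow> ('a \<Rightarrow> int) \<Rightarrow> bool" where
  "finite_residue F v \<longleftrightarrow>
     finite (valring F v // {(x, y). x \<in> valring F v \<and> y \<in> valring F v \<and> x - y \<in> maxid F v})"

text \<open>p-adic field: a complete discretely valued field of characteristic 0 with finite residue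
  field (equivalently, a finite extension of Q_p); characteristic 0 comes from the type class.\<close>
definition padic_field :: "'a::field_char_0 set \<Rightarrow> ('a \<Rightarrow> int) \<Rightarrow> bool" where
  "padic_field F v \<longleftrightarrow> subfield F \<and> valuation_on F v \<and> complete_wrt F v \<and> finite_residue F v"

definition uniformizer :: "'a::field set \<Rightarrow> ('a \<Rightarrow> int) \<Rightarrow> 'a \<Rightarrow> bool" where
  "uniformizer F v t \<longleftrightarrow> t \<in> F \<and> t \<noteq> 0 \<and> 0 < v t \<and>
     (\<forall>x\<in>F. x \<noteq> 0 \<longrightarrow> 0 < v x \<longrightarrow> v t \<le> v x)"

definition K_span :: "'a::field set \<Rightarrow> 'a set \<Rightarrow> 'a set" where
  "K_span K B = {x. \<exists>c. (\<forall>b\<in>B. c b \<in> K) \<and> x = (\<Sum>b\<in>B. c b * b)}"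

definition K_indep :: "'a::field set \<Rightarrow> 'a set \<Rightarrow> bool" where
  "K_indep K B \<longleftrightarrow> (\<forall>c. (\<forall>b\<in>B. c b \<in> K) \<and> (\<Sum>b\<in>B. c b * b) = 0 \<longrightarrow> (\<forall>b\<in>B. c b = 0))"

definition K_basis :: "'a::field set \<Rightarrow> 'a set \<Rightarrow> 'a set \<Rightarrow> bool" where
  "K_basis K L B \<longleftrightarrow> finite B \<and> B \<subseteq> L \<and> K_indep K B \<and> K_span K B = L"

definition finite_ext :: "'a::field set \<Rightarrow> 'a set \<Rightarrow> bool" where
  "finite_ext K L \<longleftrightarrow> (\<exists>B. K_basis K L B)"

definition degree :: "'a::field set \<Rightarrow> 'a set \<Rightarrow> nat" where
  "degree K L = card (SOME B. K_basis K L B)"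

text \<open>Totally ramified: ramification index e(L/K) equals [L:K].\<close>
definition totally_ramified :: "'a::field set \<Rightarrow> 'a set \<Rightarrow> ('a \<Rightarrow> int) \<Rightarrow> bool" where
  "totally_ramified K L v \<longleftrightarrow>
     (\<forall>s t. uniformizer K v s \<and> uniformizer L v t \<longrightarrow> v s = int (degree K L) * v t)"

text \<open>R_N = O_F/(N M_F); elements are cosets (sets), proj F v N x is the class of x.\<close>
definition NM :: "'a::field set \<Rightarrow> ('a \<Rightarrow> int) \<Rightarrow> nat \<Rightarrow> 'a set" where
  "NM F v N = (\<lambda>x. of_nat N * x) ` maxid F v"

definition proj :: "'a::field set \<Rightarrow> ('a \<Rightarrow> int) \<Rightarrow> nat \<Rightarrow> 'a \<Rightarrow> 'a set" where
  "proj F v N x = {y \<in> valring F v. x - y \<in> NM F v N}"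

definition ac_map :: "'a::field set \<Rightarrow> ('a \<Rightarrow> int) \<Rightarrow> nat \<Rightarrow> ('a \<Rightarrow> 'a set) \<Rightarrow> bool" where
  "ac_map F v N ac \<longleftrightarrow>
     ac 0 = proj F v N 0 \<and>
     (\<forall>x\<in>F. x \<noteq> 0 \<longrightarrow> (\<exists>a\<in>valring F v. ac x = proj F v N a \<and>
          (\<exists>b\<in>valring F v. proj F v N (a * b) = proj F v N 1))) \<and>
     (\<forall>x\<in>F. \<forall>y\<in>F. \<forall>a\<in>valring F v. \<forall>b\<in>valring F v. x \<noteq> 0 \<longrightarrow> y \<noteq> 0 \<longrightarrow>
          ac x = proj F v N a \<longrightarrow> ac y = proj F v N b \<longrightarrow> ac (x * y) = proj F v N (a * b)) \<and>
     (\<forall>u\<in>unitsO F v. ac u = proj F v N u)"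

definition compatible_ac :: "'a::field set \<Rightarrow> ('a \<Rightarrow> int) \<Rightarrow> (nat \<Rightarrow> 'a \<Rightarrow> 'a set) \<Rightarrow> bool" where
  "compatible_ac F v ac \<longleftrightarrow>
     (\<forall>N\<ge>1. ac_map F v N (ac N)) \<and>
     (\<forall>N\<ge>1. \<forall>M\<ge>1. \<forall>x\<in>F. \<forall>a\<in>valring F v.
        ac (N * M) x = proj F v (N * M) a \<longrightarrow> ac N x = proj F v N a)"

end

(*
  (2) implies (1): for a uniformizer t of L, x \<mapsto> x / t^(v x / v t) is a multiplicative
  retraction of L - {0} onto the units of O_L; reducing it modulo N M_L gives a compatible
  system. If t^e \<in> K, where e = [L:K] = e(L/K), then v(K - {0}) = v(t^e) \<int>, so this
  retraction maps K - {0} into O_K.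

  (1) implies (2): choose an integer q with v q > 0. Compatibility makes representatives of
  ac_{q^k}(x) a Cauchy sequence; its limit is a unit of O_L representing every ac_{q^k}(x),
  and for x \<in> K completeness of K lets us take the limit in O_K. Write a uniformizer s of K
  as u t^e with t a uniformizer of L and u a unit. If a and c are the limits for t and s,
  multiplicativity of ac gives c = u a^e, so \<tau> = t / a is a uniformizer of L with
  \<tau>^e = s / c \<in> K.
*)
theory Submission
  imports Defs
begin

(* v 0 is junk: 0 is treated as having valuation \<infinity>. *)
definition val_gt :: "'a::field set \<Rightarrow> ('a \<Rightarrow> int) \<Rightarrow> int \<Rightarrow> 'a set" where
  "val_gt F v n = {x \<in> F. x = 0 \<or> n < v x}"

lemma valring_subset: "K \<subseteq> L \<Longrightarrow> valring K v \<subseteq> valring L v"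
  by (auto simp: valring_def)

section \<open>Valued subfields\<close>

locale valued_field =
  fixes F :: "'a::field_char_0 set" and v :: "'a \<Rightarrow> int"
  assumes subfield: "subfield F" and valuation: "valuation_on F v"
begin

lemma zero_closed [simp]: "0 \<in> F" and one_closed [simp]: "1 \<in> F"
  using subfield by (auto simp: subfield_def)

lemma add_closed [simp]: "x \<in> F \<Longrightarrow> y \<in> F \<Longrightarrow> x + y \<in> F"
  and diff_closed [simp]: "x \<in> F \<Longrightarrow> y \<in> F \<Longrightarrow> x - y \<in> F"
  and mult_closed [simp]: "x \<in> F \<Longrightarrow> y \<in> F \<Longrightarrow> x * y \<in> F"
  using subfield by (auto simp: subfield_def)

lemma inverse_closed [simp]: "x \<in> F \<Longrightarrow> inverse x \<in> F"
  using subfield by (cases "x = 0") (auto simp: subfield_def)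

lemma divide_closed [simp]: "x \<in> F \<Longrightarrow> y \<in> F \<Longrightarrow> x / y \<in> F"
  by (simp add: divide_inverse)

lemma uminus_closed [simp]: "x \<in> F \<Longrightarrow> - x \<in> F"
  using diff_closed[of 0 x] by simp

lemma power_closed [simp]: "x \<in> F \<Longrightarrow> x ^ n \<in> F"
  by (induction n) auto

lemma power_int_closed [simp]: "x \<in> F \<Longrightarrow> x powi k \<in> F"
  by (simp add: power_int_def)

lemma of_nat_closed [simp]: "of_nat n \<in> F"
  by (induction n) auto

lemma v_mult: "x \<in> F \<Longrightarrow> y \<in> F \<Longrightarrow> x \<noteq> 0 \<Longrightarrow> y \<noteq> 0 \<Longrightarrow> v (x * y) = v x + v y"
  using valuation by (auto simp: valuation_on_def)

lemma v_add:
  "x \<in> F \<Longrightarrow> y \<in> F \<Longrightarrow> x \<noteq> 0 \<Longrightarrow> y \<noteq> 0 \<Longrightarrow> x + y \<noteq> 0 \<Longrightarrow> min (v x) (v y) \<le> v (x + y)"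
  using valuation by (auto simp: valuation_on_def)

lemma v_one [simp]: "v 1 = 0"
  using v_mult[of 1 1] by simp

lemma v_inverse: "x \<in> F \<Longrightarrow> x \<noteq> 0 \<Longrightarrow> v (inverse x) = - v x"
  using v_mult[of x "inverse x"] by simp

lemma v_divide: "x \<in> F \<Longrightarrow> y \<in> F \<Longrightarrow> x \<noteq> 0 \<Longrightarrow> y \<noteq> 0 \<Longrightarrow> v (x / y) = v x - v y"
  using v_mult[of x "inverse y"] v_inverse[of y] by (simp add: divide_inverse)

lemma v_uminus [simp]:
  assumes "x \<in> F"
  shows "v (- x) = v x"
proof -
  have "v (-1) = 0"
    using v_mult[of "-1" "-1"] by simp
  with assms show ?thesis
    using v_mult[of "-1" x] by (cases "x = 0") auto
qed

lemma v_power: "x \<in> F \<Longrightarrow> x \<noteq> 0 \<Longrightarrow> v (x ^ n) = int n * v x"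
  by (induction n) (auto simp: v_mult algebra_simps)

lemma v_power_int: "x \<in> F \<Longrightarrow> x \<noteq> 0 \<Longrightarrow> v (x powi k) = k * v x"
  by (auto simp: power_int_def v_power v_inverse power_inverse[symmetric])

lemma v_of_nat_nonneg: "n \<noteq> 0 \<Longrightarrow> 0 \<le> v (of_nat n)"
proof (induction n)
  case (Suc n)
  show ?case
  proof (cases "n = 0")
    case False
    have "(of_nat n + 1 :: 'a) \<noteq> 0"
      by (metis of_nat_Suc of_nat_eq_0_iff add.commute nat.distinct(1))
    with False have "min (v (of_nat n)) (v 1) \<le> v (of_nat n + 1)"
      using v_add[of "of_nat n" 1] by simp
    with Suc False show ?thesis by (simp add: add.commute)
  qed simp
qed simp

lemma v_of_nat_power_ge:
  assumes "q \<noteq> 0" "0 < v (of_nat q)"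
  shows "int k \<le> v (of_nat (q ^ k))"
proof -
  have "v (of_nat (q ^ k)) = int k * v (of_nat q)"
    using assms v_power[of "of_nat q" k] by simp
  moreover have "int k * 1 \<le> int k * v (of_nat q)"
    using assms by (intro mult_left_mono) auto
  ultimately show ?thesis
    by simp
qed

section \<open>Elements of large valuation and residue classes\<close>

lemma zero_val_gt [simp]: "0 \<in> val_gt F v n"
  by (simp add: val_gt_def)

lemma val_gt_add: "x \<in> val_gt F v n \<Longrightarrow> y \<in> val_gt F v n \<Longrightarrow> x + y \<in> val_gt F v n"
  using v_add[of x y] by (cases "x = 0 \<or> y = 0 \<or> x + y = 0") (auto simp: val_gt_def)

lemma val_gt_uminus: "x \<in> val_gt F v n \<Longrightarrow> - x \<in> val_gt F v n"
  by (auto simp: val_gt_def)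

lemma val_gt_diff: "x \<in> val_gt F v n \<Longrightarrow> y \<in> val_gt F v n \<Longrightarrow> x - y \<in> val_gt F v n"
  using val_gt_add[of x n "- y"] val_gt_uminus[of y n] by simp

lemma val_gt_diff_commute: "x - y \<in> val_gt F v n \<Longrightarrow> y - x \<in> val_gt F v n"
  using val_gt_uminus[of "x - y" n] by simp

lemma val_gt_antimono: "m \<le> n \<Longrightarrow> x \<in> val_gt F v n \<Longrightarrow> x \<in> val_gt F v m"
  by (auto simp: val_gt_def)

lemma valring_eq_val_gt: "valring F v = val_gt F v (-1)"
  by (auto simp: valring_def val_gt_def)

lemma val_gt_mult: "r \<in> valring F v \<Longrightarrow> x \<in> val_gt F v n \<Longrightarrow> r * x \<in> val_gt F v n"
  using v_mult[of r x] by (cases "r = 0 \<or> x = 0") (auto simp: val_gt_def valring_def)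

lemma valring_closed: "x \<in> valring F v \<Longrightarrow> x \<in> F"
  by (simp add: valring_def)

lemma valring_mult [simp]: "a \<in> valring F v \<Longrightarrow> b \<in> valring F v \<Longrightarrow> a * b \<in> valring F v"
  by (simp add: valring_eq_val_gt val_gt_mult)

lemma zero_valring [simp]: "0 \<in> valring F v" and one_valring [simp]: "1 \<in> valring F v"
  by (simp_all add: valring_def)

lemma valring_power [simp]: "a \<in> valring F v \<Longrightarrow> a ^ n \<in> valring F v"
  by (induction n) simp_all

lemma unitsO_valring: "u \<in> unitsO F v \<Longrightarrow> u \<in> valring F v"
  by (simp add: unitsO_def valring_def)

lemma unitsO_inverse: "u \<in> unitsO F v \<Longrightarrow> inverse u \<in> unitsO F v"
  using v_inverse[of u] by (simp add: unitsO_def)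

lemma eq_zero_if_val_gt_all: "(\<And>k::nat. x \<in> val_gt F v (int k)) \<Longrightarrow> x = 0"
  by (drule meta_spec[of _ "nat (v x)"]) (auto simp: val_gt_def split: if_splits)

lemma unitsO_if_diff_one_val_gt_0:
  assumes "x - 1 \<in> val_gt F v 0"
  shows "x \<in> unitsO F v"
proof (cases "x = 1")
  case False
  have x: "x \<in> F"
    using assms add_closed[of "x - 1" 1] by (simp add: val_gt_def)
  have x0: "x \<noteq> 0" and pos: "0 < v (x - 1)"
    using assms False by (auto simp: val_gt_def)
  have "min (v (x - 1)) (v 1) \<le> v ((x - 1) + 1)"
    using v_add[of "x - 1" 1] x x0 False by simp
  then have "0 \<le> v x"
    using pos by simp
  moreover have "min (v x) (v (- (x - 1))) \<le> v (x + - (x - 1))"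
    using v_add[of x "- (x - 1)"] x x0 False by simp
  moreover have "v (- (x - 1)) = v (x - 1)"
    using v_uminus[of "x - 1"] x by simp
  ultimately show ?thesis
    using x x0 pos by (simp add: unitsO_def)
qed (simp add: unitsO_def)

lemma NM_eq_val_gt:
  assumes "N \<noteq> 0"
  shows "NM F v N = val_gt F v (v (of_nat N))"
proof (intro set_eqI iffI)
  fix x
  have N0: "(of_nat N :: 'a) \<noteq> 0"
    using assms by simp
  show "x \<in> val_gt F v (v (of_nat N))" if x: "x \<in> NM F v N"
  proof -
    obtain m where m: "m \<in> maxid F v" "x = of_nat N * m"
      using x by (auto simp: NM_def)
    then show ?thesis
      using N0 v_mult[of "of_nat N" m] by (cases "m = 0") (auto simp: val_gt_def maxid_def)
  qed
  show "x \<in> NM F v N" if x: "x \<in> val_gt F v (v (of_nat N))"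
  proof -
    have "x / of_nat N \<in> maxid F v"
      using x N0 v_divide[of x "of_nat N"] by (cases "x = 0") (auto simp: val_gt_def maxid_def)
    moreover have "x = of_nat N * (x / of_nat N)"
      using N0 by simp
    ultimately show ?thesis
      unfolding NM_def by blast
  qed
qed

lemma proj_eq_iff:
  assumes N: "N \<noteq> 0" and a: "a \<in> valring F v" and b: "b \<in> valring F v"
  shows "proj F v N a = proj F v N b \<longleftrightarrow> a - b \<in> val_gt F v (v (of_nat N))"
proof
  assume "proj F v N a = proj F v N b"
  moreover have "a \<in> proj F v N a"
    using a N by (simp add: proj_def NM_eq_val_gt)
  ultimately show "a - b \<in> val_gt F v (v (of_nat N))"
    using N by (auto simp: proj_def NM_eq_val_gt intro: val_gt_diff_commute)
next
  assume ab: "a - b \<in> val_gt F v (v (of_nat N))"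
  have "a - y \<in> val_gt F v (v (of_nat N)) \<longleftrightarrow> b - y \<in> val_gt F v (v (of_nat N))" for y
    using val_gt_add[OF ab, of "b - y"] val_gt_diff[OF _ ab, of "a - y"] by auto
  then show "proj F v N a = proj F v N b"
    using N by (auto simp: proj_def NM_eq_val_gt)
qed

lemma proj_mult_cong:
  assumes N: "N \<noteq> 0"
    and valring: "a \<in> valring F v" "a' \<in> valring F v" "b \<in> valring F v" "b' \<in> valring F v"
    and "proj F v N a = proj F v N a'" "proj F v N b = proj F v N b'"
  shows "proj F v N (a * b) = proj F v N (a' * b')"
proof -
  have "a - a' \<in> val_gt F v (v (of_nat N))" "b - b' \<in> val_gt F v (v (of_nat N))"
    using assms proj_eq_iff by auto
  moreover have "a * b - a' * b' = b * (a - a') + a' * (b - b')"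
    by (simp add: algebra_simps)
  ultimately show ?thesis
    using N valring proj_eq_iff val_gt_add val_gt_mult by simp
qed

lemma proj_eq_reduce_modulus:
  assumes "N \<noteq> 0" "M \<noteq> 0" "a \<in> valring F v" "b \<in> valring F v"
    and "proj F v (N * M) a = proj F v (N * M) b"
  shows "proj F v N a = proj F v N b"
proof -
  have "v (of_nat N) \<le> v (of_nat (N * M))"
    using assms(1,2) v_mult[of "of_nat N" "of_nat M"] v_of_nat_nonneg[of M] by simp
  moreover have "a - b \<in> val_gt F v (v (of_nat (N * M)))"
    using assms proj_eq_iff[of "N * M" a b] by simp
  ultimately have "a - b \<in> val_gt F v (v (of_nat N))"
    by (rule val_gt_antimono)
  with assms show ?thesis
    using proj_eq_iff by simp
qed

lemma eq_if_proj_power_eq: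
  assumes "q \<noteq> 0" "0 < v (of_nat q)" "a \<in> valring F v" "b \<in> valring F v"
    and "\<And>k. proj F v (q ^ k) a = proj F v (q ^ k) b"
  shows "a = b"
proof -
  have "a - b \<in> val_gt F v (int k)" for k
    using assms proj_eq_iff[of "q ^ k" a b] val_gt_antimono[OF v_of_nat_power_ge] by simp
  then show ?thesis
    using eq_zero_if_val_gt_all by fastforce
qed

section \<open>Uniformizers\<close>

lemma ex_uniformizer: "\<exists>t. uniformizer F v t"
proof -
  obtain x where x: "x \<in> F" "x \<noteq> 0" "v x \<noteq> 0"
    using valuation by (auto simp: valuation_on_def)
  obtain y where y: "y \<in> F" "y \<noteq> 0" "v y > 0"
    using x v_inverse[of x] by (cases "v x > 0") (auto intro: that[of x] that[of "inverse x"])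
  define P where "P n \<longleftrightarrow> (\<exists>z\<in>F. z \<noteq> 0 \<and> v z = int n \<and> n > 0)" for n
  have "P (nat (v y))"
    using y by (auto simp: P_def)
  then have "P (LEAST n. P n)"
    by (rule LeastI)
  then obtain t where t: "t \<in> F" "t \<noteq> 0" "v t = int (LEAST n. P n)" "(LEAST n. P n) > 0"
    by (auto simp: P_def)
  have "v t \<le> v z" if z: "z \<in> F" "z \<noteq> 0" "0 < v z" for z
  proof -
    have "P (nat (v z))"
      using z by (auto simp: P_def)
    then have "(LEAST n. P n) \<le> nat (v z)"
      by (rule Least_le)
    with t(3) z show ?thesis
      by linarith
  qed
  with t show ?thesis
    by (auto simp: uniformizer_def)
qed

definition unit_part :: "'a \<Rightarrow> 'a \<Rightarrow> 'a" where
  "unit_part t x = x / t powi (v x div v t)"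

lemma unit_part_zero [simp]: "unit_part t 0 = 0"
  by (simp add: unit_part_def)

lemma unit_part_closed: "t \<in> F \<Longrightarrow> x \<in> F \<Longrightarrow> unit_part t x \<in> F"
  by (simp add: unit_part_def)

lemma v_unit_part:
  assumes "t \<in> F" "t \<noteq> 0" "x \<in> F" "x \<noteq> 0"
  shows "v (unit_part t x) = v x mod v t"
proof -
  have "v (unit_part t x) = v x - (v x div v t) * v t"
    using assms v_divide[of x "t powi (v x div v t)"] v_power_int[of t] by (simp add: unit_part_def)
  then show ?thesis
    by (simp add: minus_div_mult_eq_mod)
qed

lemma uniformizer_dvd_v:
  assumes t: "uniformizer F v t" and x: "x \<in> F" "x \<noteq> 0"
  shows "v t dvd v x"
proof (rule ccontr)
  assume "\<not> v t dvd v x"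
  have t0: "t \<in> F" "t \<noteq> 0" "v t > 0"
    using t by (auto simp: uniformizer_def)
  have "v x mod v t \<noteq> 0" "0 \<le> v x mod v t" "v x mod v t < v t"
    using \<open>\<not> v t dvd v x\<close> t0 by (auto simp: dvd_eq_mod_eq_0)
  then have "0 < v (unit_part t x)" "v (unit_part t x) < v t"
    using v_unit_part[OF t0(1,2) x] by linarith+
  moreover have "unit_part t x \<in> F" "unit_part t x \<noteq> 0"
    using x t0 unit_part_closed by (auto simp: unit_part_def)
  ultimately show False
    using t unfolding uniformizer_def by force
qed

lemma unit_part_unitsO:
  assumes t: "uniformizer F v t" and x: "x \<in> F" "x \<noteq> 0"
  shows "unit_part t x \<in> unitsO F v"
proof -
  have t0: "t \<in> F" "t \<noteq> 0"
    using t by (auto simp: uniformizer_def)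
  then have "v (unit_part t x) = 0"
    using v_unit_part[OF t0 x] uniformizer_dvd_v[OF t x] by (simp add: dvd_eq_mod_eq_0)
  with t0 x show ?thesis
    by (simp add: unitsO_def unit_part_def)
qed

lemma unit_part_of_unitsO: "u \<in> unitsO F v \<Longrightarrow> unit_part t u = u"
  by (simp add: unitsO_def unit_part_def)

lemma unit_part_mult:
  assumes t: "uniformizer F v t" and x: "x \<in> F" "x \<noteq> 0" and y: "y \<in> F" "y \<noteq> 0"
  shows "unit_part t (x * y) = unit_part t x * unit_part t y"
proof -
  have "v (x * y) div v t = v x div v t + v y div v t"
    using v_mult[OF x(1) y(1) x(2) y(2)] div_plus_div_distrib_dvd_left[OF uniformizer_dvd_v[OF t x]]
    by simp
  moreover have "t \<noteq> 0"
    using t by (simp add: uniformizer_def)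
  ultimately show ?thesis
    by (simp add: unit_part_def power_int_add)
qed

lemma unit_part_valring: "uniformizer F v t \<Longrightarrow> x \<in> F \<Longrightarrow> unit_part t x \<in> valring F v"
  using unit_part_unitsO unitsO_valring by (cases "x = 0") auto

lemma uniformizer_divide_unitsO:
  assumes "uniformizer F v t" "a \<in> unitsO F v"
  shows "uniformizer F v (t / a)"
  using assms v_divide[of t a] by (simp add: uniformizer_def unitsO_def)

section \<open>Completeness and the residue characteristic\<close>

lemma complete_subset_limit:
  assumes KF: "K \<subseteq> F" and complete: "complete_wrt K v" and X: "\<And>k. X k \<in> K"
    and r: "\<And>k. int k \<le> r k" and cauchy: "\<And>k l. k \<le> l \<Longrightarrow> X k - X l \<in> val_gt F v (r k)"
  shows "\<exists>a\<in>K. \<forall>k. X k - a \<in> val_gt F v (r k)"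
proof -
  have "X i - X j \<in> val_gt F v (r (min i j))" for i j
    using cauchy[of i j] cauchy[of j i] val_gt_diff_commute by (cases "i \<le> j") (auto simp: min_def)
  then have "\<exists>M. \<forall>i\<ge>M. \<forall>j\<ge>M. X i = X j \<or> n \<le> v (X i - X j)" for n :: int
  proof (intro exI allI impI)
    fix i j assume "nat n \<le> i" "nat n \<le> j"
    then have "n \<le> r (min i j)"
      using r[of "min i j"] by linarith
    then show "X i = X j \<or> n \<le> v (X i - X j)"
      using \<open>X i - X j \<in> val_gt F v (r (min i j))\<close> by (auto simp: val_gt_def)
  qed
  then obtain a where a: "a \<in> K" and lim: "\<forall>n::int. \<exists>M. \<forall>i\<ge>M. X i = a \<or> n \<le> v (X i - a)"
    using complete X unfolding complete_wrt_def by blast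
  have "X k - a \<in> val_gt F v (r k)" for k
  proof -
    obtain M where M: "\<forall>i\<ge>M. X i = a \<or> r k + 1 \<le> v (X i - a)"
      using lim by blast
    define i where "i = max M k"
    have "X i \<in> F" "a \<in> F"
      using X a KF by auto
    then have "X i - a \<in> val_gt F v (r k)"
      using M[rule_format, of i] by (auto simp: i_def val_gt_def)
    moreover have "X k - X i \<in> val_gt F v (r k)"
      using cauchy by (simp add: i_def)
    ultimately show ?thesis
      using val_gt_add by fastforce
  qed
  with a show ?thesis
    by blast
qed

lemma ex_nat_v_pos:
  assumes "finite_residue F v"
  shows "\<exists>q::nat. q \<noteq> 0 \<and> 0 < v (of_nat q)"
proof -
  define R where "R = {(x, y). x \<in> valring F v \<and> y \<in> valring F v \<and> x - y \<in> maxid F v}"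
  define f where "f i = R `` {of_nat i :: 'a}" for i :: nat
  have of_nat_valring: "(of_nat i :: 'a) \<in> valring F v" for i
    using v_of_nat_nonneg[of i] by (cases "i = 0") (auto simp: valring_def)
  have "range f \<subseteq> valring F v // R"
    unfolding f_def using of_nat_valring by (blast intro: quotientI)
  moreover have "finite (valring F v // R)"
    using assms by (simp add: finite_residue_def R_def)
  ultimately have "finite (range f)"
    by (rule finite_subset)
  then have "\<not> inj f"
    by (meson finite_imageD infinite_UNIV_nat)
  then obtain i j where ij: "i < j" "f i = f j"
    unfolding inj_def by (metis linorder_neqE)
  have "(of_nat i :: 'a) \<in> f i"
    using of_nat_valring[of i] by (simp add: f_def R_def maxid_def)
  then have "(of_nat i :: 'a) \<in> f j"
    using ij(2) by simp
  then have "(of_nat j :: 'a) - of_nat i \<in> maxid F v"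
    unfolding f_def R_def by blast
  then have "(of_nat (j - i) :: 'a) \<in> maxid F v"
    using ij by (simp add: of_nat_diff)
  moreover have "(of_nat (j - i) :: 'a) \<noteq> 0"
    using ij by simp
  ultimately have "0 < v (of_nat (j - i) :: 'a)"
    unfolding maxid_def by blast
  with ij show ?thesis
    by (intro exI[of _ "j - i"]) simp
qed

section \<open>Angular component maps\<close>

lemma ac_map_mult:
  "ac_map F v N ac \<Longrightarrow> x \<in> F \<Longrightarrow> y \<in> F \<Longrightarrow> x \<noteq> 0 \<Longrightarrow> y \<noteq> 0 \<Longrightarrow>
   a \<in> valring F v \<Longrightarrow> b \<in> valring F v \<Longrightarrow> ac x = proj F v N a \<Longrightarrow> ac y = proj F v N b \<Longrightarrow>
   ac (x * y) = proj F v N (a * b)"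
  unfolding ac_map_def by blast

lemma ac_map_unitsO: "ac_map F v N ac \<Longrightarrow> u \<in> unitsO F v \<Longrightarrow> ac u = proj F v N u"
  unfolding ac_map_def by blast

lemma ac_map_power:
  assumes "ac_map F v N ac" "x \<in> F" "x \<noteq> 0" "a \<in> valring F v" "ac x = proj F v N a"
  shows "ac (x ^ n) = proj F v N (a ^ n)"
proof (induction n)
  case 0
  then show ?case
    using assms ac_map_unitsO[of N ac 1] by (simp add: unitsO_def)
next
  case (Suc n)
  then show ?case
    using assms ac_map_mult[of N ac x "x ^ n" a "a ^ n"] by simp
qed

lemma ac_map_unitsO_mult_power:
  assumes ac: "ac_map F v N ac" and u: "u \<in> unitsO F v" and t: "t \<in> F" "t \<noteq> 0"
    and a: "a \<in> valring F v" "ac t = proj F v N a"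
  shows "ac (u * t ^ n) = proj F v N (u * a ^ n)"
proof (rule ac_map_mult[OF ac])
  show "ac u = proj F v N u"
    by (rule ac_map_unitsO[OF ac u])
  show "ac (t ^ n) = proj F v N (a ^ n)"
    by (rule ac_map_power[OF ac t a])
qed (use u t a(1) unitsO_valring in \<open>auto simp: unitsO_def\<close>)

lemma ac_map_rep:
  assumes "ac_map F v N ac" "x \<in> F"
  shows "\<exists>a\<in>valring F v. ac x = proj F v N a"
proof (cases "x = 0")
  case True
  then show ?thesis
    using assms(1) zero_valring unfolding ac_map_def by metis
next
  case False
  then show ?thesis
    using assms unfolding ac_map_def by meson
qed

lemma ac_map_nonzero:
  "ac_map F v N ac \<Longrightarrow> x \<in> F \<Longrightarrow> x \<noteq> 0 \<Longrightarrow>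
   \<exists>a\<in>valring F v. ac x = proj F v N a \<and> (\<exists>b\<in>valring F v. proj F v N (a * b) = proj F v N 1)"
  unfolding ac_map_def by blast

lemma ac_map_rep_unitsO:
  assumes ac: "ac_map F v N ac" and N: "N \<noteq> 0" and x: "x \<in> F" "x \<noteq> 0"
    and a: "a \<in> valring F v" "ac x = proj F v N a"
  shows "a \<in> unitsO F v"
proof -
  obtain a' b where a': "a' \<in> valring F v" "ac x = proj F v N a'"
    and b: "b \<in> valring F v" "proj F v N (a' * b) = proj F v N 1"
    using ac_map_nonzero[OF ac x] by blast
  have "proj F v N a = proj F v N a'"
    using a(2) a'(2) by simp
  then have "a - a' \<in> val_gt F v (v (of_nat N))" "a' * b - 1 \<in> val_gt F v (v (of_nat N))"
    using a(1) a'(1) b proj_eq_iff[OF N] by simp_all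
  then have "a - a' \<in> val_gt F v 0" "a' * b - 1 \<in> val_gt F v 0"
    using val_gt_antimono[OF v_of_nat_nonneg[OF N]] by blast+
  then have "b * (a - a') + (a' * b - 1) \<in> val_gt F v 0"
    using b(1) by (simp add: val_gt_add val_gt_mult)
  moreover have "b * (a - a') + (a' * b - 1) = a * b - 1"
    by (simp add: algebra_simps)
  ultimately have "a * b \<in> unitsO F v"
    using unitsO_if_diff_one_val_gt_0 by simp
  then have "v a + v b = 0" "a \<noteq> 0" "b \<noteq> 0"
    using v_mult[of a b] a b valring_closed by (auto simp: unitsO_def)
  with a b show ?thesis
    by (auto simp: unitsO_def valring_def)
qed

lemma ac_map_unit_part:
  assumes t: "uniformizer F v t" and N: "N \<noteq> 0"
  shows "ac_map F v N (\<lambda>x. proj F v N (unit_part t x))"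
proof -
  have "\<exists>b\<in>valring F v. proj F v N (unit_part t x * b) = proj F v N 1"
    if "x \<in> F" "x \<noteq> 0" for x
  proof
    have u: "unit_part t x \<in> unitsO F v"
      using unit_part_unitsO[OF t that] .
    then show "inverse (unit_part t x) \<in> valring F v"
      by (intro unitsO_valring unitsO_inverse)
    have "unit_part t x * inverse (unit_part t x) = 1"
      using u by (simp add: unitsO_def)
    then show "proj F v N (unit_part t x * inverse (unit_part t x)) = proj F v N 1"
      by simp
  qed
  moreover have "proj F v N (unit_part t (x * y)) = proj F v N (a * b)"
    if "x \<in> F" "y \<in> F" "x \<noteq> 0" "y \<noteq> 0" "a \<in> valring F v" "b \<in> valring F v"
      "proj F v N (unit_part t x) = proj F v N a" "proj F v N (unit_part t y) = proj F v N b"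
    for x y a b
  proof -
    have "proj F v N (unit_part t x * unit_part t y) = proj F v N (a * b)"
      by (rule proj_mult_cong[OF N]) (use that unit_part_valring[OF t] in simp_all)
    then show ?thesis
      using unit_part_mult[OF t that(1,3,2,4)] by simp
  qed
  ultimately show ?thesis
    using unit_part_valring[OF t] by (auto simp: ac_map_def unit_part_of_unitsO)
qed

lemma compatible_ac_unit_part:
  assumes t: "uniformizer F v t"
  shows "compatible_ac F v (\<lambda>N x. proj F v N (unit_part t x))"
  unfolding compatible_ac_def
proof (intro conjI allI impI ballI)
  show "ac_map F v N (\<lambda>x. proj F v N (unit_part t x))" if "N \<ge> 1" for N
    using ac_map_unit_part[OF t] that by simp
  show "proj F v N (unit_part t x) = proj F v N a"
    if "N \<ge> 1" "M \<ge> 1" "x \<in> F" "a \<in> valring F v"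
      "proj F v (N * M) (unit_part t x) = proj F v (N * M) a" for N M x a
    using that unit_part_valring[OF t] by (intro proj_eq_reduce_modulus[of N M]) simp_all
qed

lemma compatible_ac_ac_map: "compatible_ac F v ac \<Longrightarrow> N \<noteq> 0 \<Longrightarrow> ac_map F v N (ac N)"
  by (simp add: compatible_ac_def)

lemma compatible_ac_reduce_modulus:
  "compatible_ac F v ac \<Longrightarrow> N \<noteq> 0 \<Longrightarrow> M \<noteq> 0 \<Longrightarrow> x \<in> F \<Longrightarrow> a \<in> valring F v \<Longrightarrow>
   ac (N * M) x = proj F v (N * M) a \<Longrightarrow> ac N x = proj F v N a"
  unfolding compatible_ac_def by (metis less_one not_le)

lemma compatible_ac_limit:
  assumes ac: "compatible_ac F v ac" and q: "q \<noteq> 0" "0 < v (of_nat q)"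
    and KF: "K \<subseteq> F" and complete: "complete_wrt K v" and x: "x \<in> F"
    and reps: "\<And>k. \<exists>a\<in>valring K v. ac (q ^ k) x = proj F v (q ^ k) a"
  shows "\<exists>c\<in>valring K v. \<forall>k. ac (q ^ k) x = proj F v (q ^ k) c"
proof -
  obtain A where A: "\<And>k. A k \<in> valring K v" "\<And>k. ac (q ^ k) x = proj F v (q ^ k) (A k)"
    using reps by metis
  have A_valring: "A k \<in> valring F v" for k
    using A(1) valring_subset[OF KF] by blast
  have cauchy: "A k - A l \<in> val_gt F v (v (of_nat (q ^ k)))" if kl: "k \<le> l" for k l
  proof -
    obtain m where l: "l = k + m"
      using le_Suc_ex[OF kl] by blast
    have "ac (q ^ k * q ^ m) x = proj F v (q ^ k * q ^ m) (A l)"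
      using A(2)[of l] unfolding l power_add .
    then have "ac (q ^ k) x = proj F v (q ^ k) (A l)"
      using compatible_ac_reduce_modulus[OF ac, where N = "q ^ k" and M = "q ^ m"] x A_valring q(1)
      by simp
    then show ?thesis
      using A(2)[of k] proj_eq_iff[of "q ^ k"] A_valring q(1) by simp
  qed
  have "\<exists>c\<in>K. \<forall>k. A k - c \<in> val_gt F v (v (of_nat (q ^ k)))"
    using A(1) v_of_nat_power_ge[OF q] cauchy
    by (intro complete_subset_limit[OF KF complete]) (auto simp: valring_def)
  then obtain c where c: "c \<in> K" "\<And>k. A k - c \<in> val_gt F v (v (of_nat (q ^ k)))"
    by blast
  have "A 0 - c \<in> val_gt F v (-1)"
    using c(2)[of 0] val_gt_antimono[of "-1" 0] by simp
  with A_valring[of 0] have "A 0 - (A 0 - c) \<in> val_gt F v (-1)"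
    unfolding valring_eq_val_gt by (rule val_gt_diff)
  then have c_valring: "c \<in> valring F v"
    by (simp add: valring_eq_val_gt)
  have "ac (q ^ k) x = proj F v (q ^ k) c" for k
    using A(2)[of k] c(2)[of k] proj_eq_iff[of "q ^ k"] A_valring c_valring q(1) by simp
  moreover have "c \<in> valring K v"
    using c(1) c_valring by (simp add: valring_def)
  ultimately show ?thesis
    by blast
qed

lemma compatible_ac_limit_unitsO:
  assumes ac: "compatible_ac F v ac" and q: "q \<noteq> 0" "0 < v (of_nat q)"
    and complete: "complete_wrt F v" and x: "x \<in> F" "x \<noteq> 0"
  shows "\<exists>a\<in>unitsO F v. \<forall>k. ac (q ^ k) x = proj F v (q ^ k) a"
proof -
  have acm: "ac_map F v (q ^ k) (ac (q ^ k))" for k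
    using compatible_ac_ac_map[OF ac] q(1) by simp
  have "\<exists>a\<in>valring F v. \<forall>k. ac (q ^ k) x = proj F v (q ^ k) a"
    using ac_map_rep[OF acm x(1)] by (rule compatible_ac_limit[OF ac q order_refl complete x(1)])
  then obtain a where a: "a \<in> valring F v" "\<And>k. ac (q ^ k) x = proj F v (q ^ k) a"
    by blast
  moreover have "a \<in> unitsO F v"
    using ac_map_rep_unitsO[OF acm[of 0] _ x a(1) a(2)[of 0]] by simp
  ultimately show ?thesis
    by blast
qed

end

section \<open>Totally ramified extensions\<close>

lemma padic_field_valued_field: "padic_field F v \<Longrightarrow> valued_field F v"
  by (simp add: padic_field_def valued_field_def)

lemma totally_ramified_v_uniformizer:
  "totally_ramified K L v \<Longrightarrow> uniformizer K v s \<Longrightarrow> uniformizer L v t \<Longrightarrow>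
   v s = int (degree K L) * v t"
  by (simp add: totally_ramified_def)

lemma totally_ramified_unitsO:
  assumes "valued_field L v" "K \<subseteq> L" "totally_ramified K L v"
    and s: "uniformizer K v s" and t: "uniformizer L v t"
  shows "s / t ^ degree K L \<in> unitsO L v"
proof -
  interpret L: valued_field L v by fact
  have "s \<in> L" "s \<noteq> 0" "t \<in> L" "t \<noteq> 0"
    using assms by (auto simp: uniformizer_def)
  moreover have "v s = int (degree K L) * v t"
    using assms totally_ramified_v_uniformizer by blast
  ultimately show ?thesis
    using L.v_divide[of s "t ^ degree K L"] L.v_power[of t] by (simp add: unitsO_def)
qed

lemma ex_compatible_ac_restricting:
  fixes K L :: "'a::field_char_0 set" and v :: "'a \<Rightarrow> int"
  assumes K: "valued_field K v" and L: "valued_field L v" and KL: "K \<subseteq> L"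
    and tr: "totally_ramified K L v" and t: "uniformizer L v t" and te: "t ^ degree K L \<in> K"
  shows "\<exists>ac. compatible_ac L v ac \<and> (\<forall>N\<ge>1. \<forall>x\<in>K. \<exists>a\<in>valring K v. ac N x = proj L v N a)"
proof -
  interpret K: valued_field K v by fact
  interpret L: valued_field L v by fact
  obtain s where s: "uniformizer K v s"
    using K.ex_uniformizer by blast
  have "L.unit_part t x \<in> valring K v" if x: "x \<in> K" for x
  proof (cases "x = 0")
    case False
    obtain m where "v x = v s * m"
      using K.uniformizer_dvd_v[OF s x False] by (auto simp: dvd_def)
    moreover have "v s = int (degree K L) * v t" "v t \<noteq> 0"
      using totally_ramified_v_uniformizer[OF tr s t] t by (auto simp: uniformizer_def)
    ultimately have "v x div v t = int (degree K L) * m"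
      by simp
    then have "L.unit_part t x = x / (t ^ degree K L) powi m"
      by (simp add: L.unit_part_def power_int_mult)
    then have "L.unit_part t x \<in> K"
      using te x by simp
    moreover have "L.unit_part t x \<in> unitsO L v"
      using L.unit_part_unitsO[OF t] x KL False by auto
    ultimately show ?thesis
      by (simp add: unitsO_def valring_def)
  qed (simp add: valring_def)
  then show ?thesis
    using L.compatible_ac_unit_part[OF t] by blast
qed

lemma ex_uniformizer_power_in_subfield:
  fixes K L :: "'a::field_char_0 set" and v :: "'a \<Rightarrow> int"
  assumes pK: "padic_field K v" and pL: "padic_field L v" and KL: "K \<subseteq> L"
    and tr: "totally_ramified K L v" and ac: "compatible_ac L v ac"
    and restr: "\<forall>N\<ge>1. \<forall>x\<in>K. \<exists>a\<in>valring K v. ac N x = proj L v N a"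
  shows "\<exists>\<tau>. uniformizer L v \<tau> \<and> \<tau> ^ degree K L \<in> K"
proof -
  interpret K: valued_field K v using padic_field_valued_field[OF pK] .
  interpret L: valued_field L v using padic_field_valued_field[OF pL] .
  obtain q where q: "q \<noteq> 0" "0 < v (of_nat q)"
    using L.ex_nat_v_pos pL by (auto simp: padic_field_def)
  obtain t where t: "uniformizer L v t"
    using L.ex_uniformizer by blast
  obtain s where s: "uniformizer K v s"
    using K.ex_uniformizer by blast
  define e where "e = degree K L"
  define u where "u = s / t ^ e"
  have tL: "t \<in> L" "t \<noteq> 0" and sK: "s \<in> K" "s \<noteq> 0"
    using s t by (auto simp: uniformizer_def)
  have u: "u \<in> unitsO L v"
    using totally_ramified_unitsO[OF L.valued_field_axioms KL tr s t] by (simp add: u_def e_def)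
  have s_eq: "s = u * t ^ e"
    using tL by (simp add: u_def)
  obtain a where a: "a \<in> unitsO L v" "\<And>k. ac (q ^ k) t = proj L v (q ^ k) a"
    using L.compatible_ac_limit_unitsO[OF ac q _ tL] pL by (auto simp: padic_field_def)
  have "\<exists>c\<in>valring K v. \<forall>k. ac (q ^ k) s = proj L v (q ^ k) c"
    by (rule L.compatible_ac_limit[OF ac q KL _ ])
      (use pK sK KL restr q(1) in \<open>auto simp: padic_field_def\<close>)
  then obtain c where c: "c \<in> valring K v" "\<And>k. ac (q ^ k) s = proj L v (q ^ k) c"
    by blast
  have "ac_map L v (q ^ k) (ac (q ^ k))" for k
    using L.compatible_ac_ac_map[OF ac] q(1) by simp
  then have "ac (q ^ k) s = proj L v (q ^ k) (u * a ^ e)" for k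
    unfolding s_eq using u tL L.unitsO_valring[OF a(1)] a(2)[of k]
    by (rule L.ac_map_unitsO_mult_power[where ac = "ac (q ^ k)"])
  moreover have "c \<in> valring L v" "u * a ^ e \<in> valring L v"
    using c(1) valring_subset[OF KL] u a(1) L.unitsO_valring by auto
  ultimately have "c = u * a ^ e"
    using c(2) by (intro L.eq_if_proj_power_eq[OF q]) simp_all
  then have "(t / a) ^ e = s / c"
    using s_eq a(1) u by (simp add: unitsO_def power_divide)
  moreover have "s / c \<in> K"
    using sK c(1) by (simp add: valring_def)
  ultimately show ?thesis
    using L.uniformizer_divide_unitsO[OF t a(1)] by (auto simp: e_def)
qed

theorem lemma3p2:
  fixes K L :: "'a::field_char_0 set" and v :: "'a \<Rightarrow> int"
  assumes "padic_field K v" and "padic_field L v" and "K \<subseteq> L"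
    and "finite_ext K L" and "totally_ramified K L v"
  shows "(\<exists>ac. compatible_ac L v ac \<and>
            (\<forall>N\<ge>1. \<forall>x\<in>K. \<exists>a\<in>valring K v. ac N x = proj L v N a))
         \<longleftrightarrow> (\<exists>t. uniformizer L v t \<and> t ^ degree K L \<in> K)"
  using ex_uniformizer_power_in_subfield[OF assms(1,2,3,5)]
    ex_compatible_ac_restricting[OF padic_field_valued_field[OF assms(1)]
      padic_field_valued_field[OF assms(2)] assms(3,5)]
  by blast

end
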